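(* Let $d_n$ be the number of FQ-legal index sets contained in $\{1,\dots,n\}$ (including the empty set). Let $r_1\approx1.39704$ be the largest (real) root of $r^7-r^6-r^2-1=0$ and $r_2\approx1.07378$ the modulus of the next largest roots (a complex conjugate pair; all other roots have modulus at most $1$). Then there is a constant $\beta_1>0$ such that \[ d_n=\beta_1 r_1^n\left[1+O\bigl((r_2/r_1)^n\bigr)\right]. \]
   Context: An FQ-legal index set is a finite set $S$ of positive integers such that no two elements of $S$ differ by $1$, $3$ or $4$, and $S$ does not contain both $1$ and $3$. (These are exactly the index sets of FQ-legal decompositions with respect to the Fibonacci Quilt sequence.) *)

theory Defs
  imports Complex_Main "HOL-Library.Landau_Symbols"
begin

definition FQ_legal :: "nat set \<Rightarrow> bool" where
  "FQ_legal S \<longleftrightarrow> finite S \<and> (\<forall>x\<in>S. x > 0) \<and>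
     (\<forall>x\<in>S. \<forall>y\<in>S. y - x \<notin> {1, 3, 4}) \<and> \<not> (1 \<in> S \<and> 3 \<in> S)"

definition FQ_count :: "nat \<Rightarrow> nat" where
  "FQ_count n = card {S. S \<subseteq> {1..n} \<and> FQ_legal S}"

definition FQ_poly_root :: "complex \<Rightarrow> bool" where
  "FQ_poly_root z \<longleftrightarrow> z ^ 7 - z ^ 6 - z ^ 2 - 1 = 0"

end

theory Submission
  imports Defs "HOL-Computational_Algebra.Fundamental_Theorem_Algebra"
begin

text \<open>
  Splitting a legal set in \<open>{1..n+7}\<close> according to whether it contains \<open>n+7\<close> and \<open>n+5\<close>
  gives the recurrence \<open>d (n+7) = d (n+6) + d (n+2) + d n\<close>, whose characteristic polynomial
  \<open>z^7 - z^6 - z^2 - 1\<close> is squarefree. Hence \<open>d n = \<Sum>z. c z * z^n\<close> over its roots. The real root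
  \<open>r1\<close> strictly dominates every other root in modulus: \<open>|z|^6 (|z| - 1) \<le> |z^2 + 1| \<le> |z|^2 + 1\<close>
  forces \<open>|z| \<le> r1\<close>, with equality only for \<open>z = r1\<close>. So \<open>d n = \<beta>1 r1^n + O(r2^n)\<close>, and
  \<open>\<beta>1 > 0\<close> because the recurrence has nonnegative coefficients, which gives \<open>d n \<ge> r1^(n-6)\<close>.
\<close>

subsection \<open>Counting legal sets\<close>

lemma FQ_legal_subset: "FQ_legal S \<Longrightarrow> T \<subseteq> S \<Longrightarrow> FQ_legal T"
  unfolding FQ_legal_def by (auto intro: finite_subset)

lemma FQ_legal_insert_iff:
  "FQ_legal (insert a T) \<longleftrightarrow> FQ_legal T \<and> a > 0 \<and>
     (\<forall>x\<in>T. a - x \<notin> {1, 3, 4} \<and> x - a \<notin> {1, 3, 4}) \<and>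
     \<not> (a = 1 \<and> 3 \<in> T) \<and> \<not> (a = 3 \<and> 1 \<in> T)"
  unfolding FQ_legal_def by auto

definition FQ_sets :: "nat \<Rightarrow> nat set set" where
  "FQ_sets n = {S. S \<subseteq> {1..n} \<and> FQ_legal S}"

lemma finite_FQ_sets: "finite (FQ_sets n)"
  unfolding FQ_sets_def by (rule finite_subset[of _ "Pow {1..n}"]) auto

lemma FQ_count_eq_card: "FQ_count n = card (FQ_sets n)"
  by (simp add: FQ_count_def FQ_sets_def)

lemma FQ_count_pos: "FQ_count n \<ge> 1"
proof -
  have "{} \<in> FQ_sets n" by (simp add: FQ_sets_def FQ_legal_def)
  then show ?thesis
    using finite_FQ_sets by (auto simp: FQ_count_eq_card Suc_le_eq card_gt_0_iff)
qed

lemma FQ_sets_decomp: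
  "FQ_sets (n + 7) = FQ_sets (n + 6) \<union> insert (n + 7) ` FQ_sets (n + 2)
     \<union> (\<lambda>T. insert (n + 5) (insert (n + 7) T)) ` FQ_sets n" (is "_ = ?A \<union> ?B \<union> ?C")
proof
  show "?A \<union> ?B \<union> ?C \<subseteq> FQ_sets (n + 7)"
    unfolding FQ_sets_def by (fastforce simp: FQ_legal_insert_iff subset_iff)
next
  show "FQ_sets (n + 7) \<subseteq> ?A \<union> ?B \<union> ?C"
  proof
    fix S assume "S \<in> FQ_sets (n + 7)"
    then have legal: "FQ_legal S" and range: "\<And>x. x \<in> S \<Longrightarrow> 1 \<le> x \<and> x \<le> n + 7"
      by (auto simp: FQ_sets_def)
    have gap: "y - x \<notin> {1, 3, 4}" if "x \<in> S" "y \<in> S" for x y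
      using legal that by (auto simp: FQ_legal_def)
    consider "n + 7 \<notin> S" | "n + 7 \<in> S" "n + 5 \<notin> S" | "n + 7 \<in> S" "n + 5 \<in> S"
      by blast
    then show "S \<in> ?A \<union> ?B \<union> ?C"
    proof cases
      case 1
      have "S \<subseteq> {1..n + 6}"
      proof
        fix x assume "x \<in> S"
        then show "x \<in> {1..n + 6}" using range[of x] 1 by (cases "x = n + 7") auto
      qed
      then show ?thesis using legal by (simp add: FQ_sets_def)
    next
      case 2
      have "S - {n + 7} \<subseteq> {1..n + 2}"
      proof
        fix x assume "x \<in> S - {n + 7}"
        then show "x \<in> {1..n + 2}" using range[of x] 2 gap[of x "n + 7"]
          by (cases "x = n + 5") auto
      qed
      then have "S - {n + 7} \<in> FQ_sets (n + 2)"
        using FQ_legal_subset[OF legal] by (simp add: FQ_sets_def)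
      moreover have "S = insert (n + 7) (S - {n + 7})" using 2 by auto
      ultimately show ?thesis by blast
    next
      case 3
      have "S - {n + 5, n + 7} \<subseteq> {1..n}"
      proof
        fix x assume "x \<in> S - {n + 5, n + 7}"
        then show "x \<in> {1..n}" using range[of x] 3 gap[of x "n + 7"] gap[of x "n + 5"]
          by (cases "x \<le> n") auto
      qed
      then have "S - {n + 5, n + 7} \<in> FQ_sets n"
        using FQ_legal_subset[OF legal] by (simp add: FQ_sets_def)
      moreover have "S = insert (n + 5) (insert (n + 7) (S - {n + 5, n + 7}))" using 3 by auto
      ultimately show ?thesis by blast
    qed
  qed
qed

lemma FQ_count_rec: "FQ_count (n + 7) = FQ_count (n + 6) + FQ_count (n + 2) + FQ_count n"
proof -
  let ?B = "insert (n + 7) ` FQ_sets (n + 2)"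
  let ?C = "(\<lambda>T. insert (n + 5) (insert (n + 7) T)) ` FQ_sets n"
  have inj_B: "inj_on (insert (n + 7)) (FQ_sets (n + 2))"
    by (rule inj_on_inverseI[where g = "\<lambda>U. U - {n + 7}"]) (auto simp: FQ_sets_def)
  have inj_C: "inj_on (\<lambda>T. insert (n + 5) (insert (n + 7) T)) (FQ_sets n)"
    by (rule inj_on_inverseI[where g = "\<lambda>U. U - {n + 5, n + 7}"]) (auto simp: FQ_sets_def)
  have no_top: "n + 7 \<notin> S" if "S \<in> FQ_sets (n + 6)" for S
    using that by (auto simp: FQ_sets_def)
  have no_5: "n + 5 \<notin> S" if "S \<in> ?B" for S
    using that by (auto simp: FQ_sets_def)
  have disj_AB: "FQ_sets (n + 6) \<inter> ?B = {}"
    using no_top by blast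
  have disj_ABC: "(FQ_sets (n + 6) \<union> ?B) \<inter> ?C = {}"
    using no_top no_5 by blast
  have "card (FQ_sets (n + 7)) = card (FQ_sets (n + 6)) + card ?B + card ?C"
    unfolding FQ_sets_decomp
    using disj_AB disj_ABC finite_FQ_sets by (simp add: card_Un_disjoint)
  then show ?thesis
    unfolding FQ_count_eq_card card_image[OF inj_B] card_image[OF inj_C] .
qed

subsection \<open>Linear recurrences with distinct characteristic roots\<close>

text \<open>\<open>poly_shift p f\<close> is \<open>p(E) f\<close> for the shift operator \<open>(E f) n = f (n + 1)\<close>.\<close>

definition poly_shift :: "'a::comm_semiring_0 poly \<Rightarrow> (nat \<Rightarrow> 'a) \<Rightarrow> nat \<Rightarrow> 'a" where
  "poly_shift p f n = (\<Sum>k\<le>degree p. coeff p k * f (n + k))"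

lemma poly_shift_eq_sum_lessThan:
  "degree p < N \<Longrightarrow> poly_shift p f n = (\<Sum>k<N. coeff p k * f (n + k))"
  unfolding poly_shift_def by (rule sum.mono_neutral_left) (auto simp: coeff_eq_0)

lemma poly_shift_1 [simp]: "poly_shift 1 f n = f n"
  by (simp add: poly_shift_def)

lemma poly_shift_linear_factor:
  fixes a :: "'a::comm_ring_1"
  shows "poly_shift ([:-a, 1:] * p) f n = poly_shift p (\<lambda>m. f (Suc m) - a * f m) n"
proof -
  let ?M = "Suc (degree p)"
  have deg: "degree ([:-a, 1:] * p) < Suc ?M"
    using degree_mult_le[of "[:-a, 1:]" p] by simp
  have coeff: "coeff ([:-a, 1:] * p) k = coeff (pCons 0 p) k - a * coeff p k" for k
    by (simp add: mult_pCons_left)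
  have "poly_shift ([:-a, 1:] * p) f n
      = (\<Sum>k<Suc ?M. coeff (pCons 0 p) k * f (n + k) - a * (coeff p k * f (n + k)))"
    unfolding poly_shift_eq_sum_lessThan[OF deg] coeff by (simp add: left_diff_distrib mult.assoc)
  also have "\<dots> = (\<Sum>k<Suc ?M. coeff (pCons 0 p) k * f (n + k))
      - a * (\<Sum>k<Suc ?M. coeff p k * f (n + k))"
    by (simp only: sum_subtractf sum_distrib_left)
  also have "(\<Sum>k<Suc ?M. coeff (pCons 0 p) k * f (n + k))
      = (\<Sum>k<?M. coeff p k * f (Suc (n + k)))"
    by (subst sum.lessThan_Suc_shift) simp
  also have "(\<Sum>k<Suc ?M. coeff p k * f (n + k)) = (\<Sum>k<?M. coeff p k * f (n + k))"
    by (simp add: coeff_eq_0)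
  also have "(\<Sum>k<?M. coeff p k * f (Suc (n + k))) - a * (\<Sum>k<?M. coeff p k * f (n + k))
      = (\<Sum>k<?M. coeff p k * (f (Suc (n + k)) - a * f (n + k)))"
    by (simp only: right_diff_distrib sum_subtractf sum_distrib_left mult.left_commute)
  also have "\<dots> = poly_shift p (\<lambda>m. f (Suc m) - a * f m) n"
    by (rule poly_shift_eq_sum_lessThan[symmetric]) simp
  finally show ?thesis .
qed

lemma poly_shift_prod_linear_eq_0_imp_power_sum:
  fixes f :: "nat \<Rightarrow> 'a::field"
  assumes "finite Z" and "\<And>n. poly_shift (\<Prod>z\<in>Z. [:-z, 1:]) f n = 0"
  shows "\<exists>c. \<forall>n. f n = (\<Sum>z\<in>Z. c z * z ^ n)"
  using assms
proof (induction Z arbitrary: f rule: finite_induct)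
  case empty
  then show ?case by simp
next
  case (insert a F)
  define g where "g m = f (Suc m) - a * f m" for m
  have "poly_shift (\<Prod>z\<in>F. [:-z, 1:]) g n = 0" for n
    using insert.prems[of n] unfolding prod.insert[OF insert.hyps] poly_shift_linear_factor g_def .
  then obtain c where c: "\<And>n. g n = (\<Sum>z\<in>F. c z * z ^ n)"
    using insert.IH by blast
  have ne: "z \<noteq> a" if "z \<in> F" for z
    using that insert.hyps by auto
  \<comment> \<open>A term \<open>z^n\<close> of \<open>g\<close> comes from the term \<open>z^n / (z - a)\<close> of \<open>f\<close>;
    the coefficient of \<open>a^n\<close> is then fixed by \<open>f 0\<close>.\<close>
  define c' where "c' z = (if z = a then f 0 - (\<Sum>y\<in>F. c y / (y - a)) else c z / (z - a))" for z
  have f_eq: "f n = c' a * a ^ n + (\<Sum>z\<in>F. c z / (z - a) * z ^ n)" for n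
  proof (induction n)
    case 0
    then show ?case by (simp add: c'_def)
  next
    case (Suc n)
    have "f (Suc n) = a * f n + g n" by (simp add: g_def)
    also have "\<dots> = c' a * a ^ Suc n + (\<Sum>z\<in>F. a * (c z / (z - a) * z ^ n) + c z * z ^ n)"
      using Suc c by (simp add: algebra_simps sum_distrib_left sum.distrib)
    also have "(\<Sum>z\<in>F. a * (c z / (z - a) * z ^ n) + c z * z ^ n)
        = (\<Sum>z\<in>F. c z / (z - a) * z ^ Suc n)"
      by (rule sum.cong) (simp_all add: ne field_simps)
    finally show ?case .
  qed
  have "(\<Sum>z\<in>F. c z / (z - a) * z ^ n) = (\<Sum>z\<in>F. c' z * z ^ n)" for n
    using insert.hyps by (intro sum.cong) (auto simp: c'_def)
  then have "f n = (\<Sum>z\<in>insert a F. c' z * z ^ n)" for n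
    using f_eq[of n] insert.hyps by simp
  then show ?case by blast
qed

subsection \<open>The characteristic polynomial and its roots\<close>

definition FQ_char_poly :: "complex poly" where
  "FQ_char_poly = [:-1, 0, -1, 0, 0, 0, -1, 1:]"

lemma poly_FQ_char_poly: "poly FQ_char_poly z = z ^ 7 - z ^ 6 - z ^ 2 - 1"
  by (simp add: FQ_char_poly_def algebra_simps eval_nat_numeral)

lemma degree_FQ_char_poly: "degree FQ_char_poly = 7"
  by (simp add: FQ_char_poly_def)

lemma poly_shift_FQ_char_poly:
  "poly_shift FQ_char_poly f n = f (n + 7) - f (n + 6) - f (n + 2) - f n"
  by (simp add: poly_shift_def FQ_char_poly_def atMost_Suc eval_nat_numeral algebra_simps)

lemma rsquarefree_FQ_char_poly: "rsquarefree FQ_char_poly"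
proof -
  have pderiv: "poly (pderiv FQ_char_poly) z = 7 * z ^ 6 - 6 * z ^ 5 - 2 * z" for z
    by (simp add: FQ_char_poly_def pderiv_pCons algebra_simps eval_nat_numeral)
  \<comment> \<open>A Bezout certificate for \<open>gcd p p' = 1\<close>.\<close>
  have bezout: "(-1651331 + 113140*z + 1062261*z^2 - 109238*z^3 - 741335*z^4 + 432572*z^5)
      * (z^7 - z^6 - z^2 - 1)
    + (-56570 + 294535*z - 1951*z^2 - 160463*z^3 + 8043*z^4 + 114733*z^5 - 61796*z^6)
      * (7*z^6 - 6*z^5 - 2*z) = 1651331" for z :: complex
    by (simp add: algebra_simps eval_nat_numeral)
  show ?thesis
    unfolding rsquarefree_roots poly_FQ_char_poly pderiv
    using bezout by (metis add_0 mult_zero_right zero_neq_numeral)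
qed

lemma FQ_char_poly_eq_prod_roots: "FQ_char_poly = (\<Prod>z | poly FQ_char_poly z = 0. [:-z, 1:])"
  using complex_poly_decompose_rsquarefree[OF rsquarefree_FQ_char_poly]
  by (simp add: FQ_char_poly_def)

lemma finite_FQ_char_poly_roots: "finite {z. poly FQ_char_poly z = 0}"
  by (rule poly_roots_finite) (simp add: FQ_char_poly_def)

lemma complex_of_real_cmod_if_cmod_diff_1:
  assumes "cmod (z - 1) = cmod z - 1"
  shows "z = complex_of_real (cmod z)"
proof -
  have "(Re z - 1)\<^sup>2 + (Im z)\<^sup>2 = (cmod z - 1)\<^sup>2"
    using cmod_power2[of "z - 1"] assms by simp
  then have Re: "Re z = cmod z"
    using cmod_power2[of z] by (simp add: power2_diff)
  then have "Im z = 0"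
    using cmod_power2[of z] by simp
  then show ?thesis
    using Re by (simp add: complex_eq_iff)
qed
lemma FQ_poly_root_of_real: "FQ_poly_root (complex_of_real x) \<longleftrightarrow> x ^ 7 - x ^ 6 - x ^ 2 - 1 = 0"
proof -
  have "(complex_of_real x) ^ 7 - (complex_of_real x) ^ 6 - (complex_of_real x) ^ 2 - 1
      = complex_of_real (x ^ 7 - x ^ 6 - x ^ 2 - 1)"
    by simp
  then show ?thesis
    unfolding FQ_poly_root_def by (simp only: of_real_eq_0_iff)
qed

lemma FQ_real_root_gt_1:
  fixes x :: real
  assumes "x ^ 7 - x ^ 6 - x ^ 2 - 1 = 0"
  shows "1 < x"
proof -
  have "x ^ 6 * (x - 1) = x ^ 2 + 1"
    using assms by (simp add: algebra_simps eval_nat_numeral)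
  then have "0 < x ^ 6 * (x - 1)" by (simp add: add_nonneg_pos)
  then show ?thesis by (simp add: zero_less_mult_iff)
qed

lemma FQ_real_poly_pos_ge_2:
  fixes x :: real
  assumes "2 \<le> x"
  shows "0 < x ^ 7 - x ^ 6 - x ^ 2 - 1"
proof -
  have "2 ^ 4 * x ^ 2 \<le> x ^ 4 * x ^ 2"
    using assms by (intro mult_right_mono power_mono) auto
  then have "16 * x ^ 2 \<le> x ^ 6" by (simp add: power_add[symmetric])
  moreover have "x ^ 6 \<le> x ^ 6 * (x - 1)"
    using assms by (simp add: mult_le_cancel_left1)
  moreover have "4 \<le> x ^ 2"
    using power_mono[OF assms, of 2] by simp
  ultimately show ?thesis by (simp add: algebra_simps eval_nat_numeral)
qed

lemma FQ_real_poly_pos_above_roots: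
  fixes r1 R :: real
  assumes "\<forall>x::real. FQ_poly_root (complex_of_real x) \<longrightarrow> x \<le> r1" and "r1 < R"
  shows "0 < R ^ 7 - R ^ 6 - R ^ 2 - 1"
proof (rule ccontr)
  define f where "f x = x ^ 7 - x ^ 6 - x ^ 2 - 1" for x :: real
  assume "\<not> 0 < R ^ 7 - R ^ 6 - R ^ 2 - 1"
  then have "f R \<le> 0" by (simp add: f_def)
  moreover have "0 < f (max R 2)"
    unfolding f_def by (rule FQ_real_poly_pos_ge_2) simp
  moreover have "continuous_on {R..max R 2} f"
    unfolding f_def by (intro continuous_intros)
  ultimately obtain x where "R \<le> x" "f x = 0"
    using IVT'[of f R 0 "max R 2"] by force
  then show False
    using assms by (auto simp: f_def FQ_poly_root_of_real)
qed

lemma FQ_root_cmod_less: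
  fixes r1 :: real
  assumes r1: "FQ_poly_root (complex_of_real r1)"
    and largest: "\<forall>x::real. FQ_poly_root (complex_of_real x) \<longrightarrow> x \<le> r1"
    and z: "FQ_poly_root z" "z \<noteq> complex_of_real r1"
  shows "cmod z < r1"
proof -
  have r1_gt_1: "1 < r1"
    using r1 FQ_real_root_gt_1 by (simp add: FQ_poly_root_of_real)
  define R where "R = cmod z"
  have "z ^ 6 * (z - 1) = z ^ 2 + 1"
    using z(1) by (simp add: FQ_poly_root_def algebra_simps eval_nat_numeral)
  then have "R ^ 6 * cmod (z - 1) = cmod (z ^ 2 + 1)"
    by (metis R_def norm_mult norm_power)
  also have "\<dots> \<le> R ^ 2 + 1"
    using norm_triangle_ineq[of "z ^ 2" 1] by (simp add: R_def norm_power)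
  finally have upper: "R ^ 6 * cmod (z - 1) \<le> R ^ 2 + 1" .
  have lower: "R ^ 6 * (R - 1) \<le> R ^ 6 * cmod (z - 1)"
    using norm_triangle_ineq2[of z 1] by (intro mult_left_mono) (auto simp: R_def)
  have "\<not> 0 < R ^ 7 - R ^ 6 - R ^ 2 - 1"
    using upper lower by (simp add: algebra_simps eval_nat_numeral)
  then have "R \<le> r1"
    using FQ_real_poly_pos_above_roots[OF largest] by force
  moreover have "R \<noteq> r1"
  proof
    assume "R = r1"
    then have "R ^ 6 * (R - 1) = R ^ 2 + 1"
      using r1 by (simp add: FQ_poly_root_of_real algebra_simps eval_nat_numeral)
    moreover have "0 < R ^ 6"
      using \<open>R = r1\<close> r1_gt_1 by simp
    ultimately have "cmod (z - 1) = R - 1"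
      using upper lower by (simp add: norm_triangle_ineq2)
    then have "z = complex_of_real r1"
      using complex_of_real_cmod_if_cmod_diff_1 \<open>R = r1\<close> R_def by metis
    then show False using z(2) by simp
  qed
  ultimately show ?thesis by (simp add: R_def)
qed

lemma FQ_second_root_modulus:
  fixes r1 r2 :: real
  assumes r1: "FQ_poly_root (complex_of_real r1)"
    and largest: "\<forall>x::real. FQ_poly_root (complex_of_real x) \<longrightarrow> x \<le> r1"
    and r2: "r2 = Max {cmod z | z. FQ_poly_root z \<and> z \<noteq> complex_of_real r1}"
  shows "0 \<le> r2" and "r2 < r1"
    and "\<And>z. FQ_poly_root z \<Longrightarrow> z \<noteq> complex_of_real r1 \<Longrightarrow> cmod z \<le> r2"
proof -
  define Z where "Z = {z. FQ_poly_root z \<and> z \<noteq> complex_of_real r1}"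
  have roots: "{z. poly FQ_char_poly z = 0} = insert (complex_of_real r1) Z"
    using r1 by (auto simp: Z_def FQ_poly_root_def poly_FQ_char_poly)
  have "finite Z"
    using finite_FQ_char_poly_roots roots by simp
  have "Z \<noteq> {}"
  proof
    assume "Z = {}"
    then have "FQ_char_poly = [:- complex_of_real r1, 1:]"
      using FQ_char_poly_eq_prod_roots roots by simp
    then have "degree FQ_char_poly = degree [:- complex_of_real r1, 1:]"
      by (rule arg_cong)
    then show False
      using degree_FQ_char_poly by simp
  qed
  have r2_Max: "r2 = Max (cmod ` Z)"
    unfolding r2 Z_def by (rule arg_cong[where f = Max]) auto
  show le_r2: "cmod z \<le> r2" if "FQ_poly_root z" "z \<noteq> complex_of_real r1" for z
    unfolding r2_Max using \<open>finite Z\<close> that by (intro Max_ge) (auto simp: Z_def)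
  have "r2 \<in> cmod ` Z"
    unfolding r2_Max using \<open>finite Z\<close> \<open>Z \<noteq> {}\<close> by (intro Max_in) auto
  then obtain z0 where "z0 \<in> Z" "r2 = cmod z0"
    by blast
  then show "0 \<le> r2" and "r2 < r1"
    using FQ_root_cmod_less[OF r1 largest] by (auto simp: Z_def)
qed

subsection \<open>Asymptotics\<close>

lemma dominant_exponential_asymptotics:
  fixes d :: "nat \<Rightarrow> real"
  assumes r2: "0 \<le> r2" "r2 < r1" and "0 < m"
    and approx: "\<And>n. \<bar>d n - \<beta> * r1 ^ n\<bar> \<le> C * r2 ^ n"
    and lower: "\<And>n. m * r1 ^ n \<le> d n"
  shows "0 < \<beta>" and "(\<lambda>n. d n / (\<beta> * r1 ^ n) - 1) \<in> O(\<lambda>n. (r2 / r1) ^ n)"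
proof -
  have r1: "0 < r1" using r2 by simp
  have err: "\<bar>d n / r1 ^ n - \<beta>\<bar> \<le> C * (r2 / r1) ^ n" for n
  proof -
    have "\<bar>d n / r1 ^ n - \<beta>\<bar> = \<bar>d n - \<beta> * r1 ^ n\<bar> / r1 ^ n"
      using r1 by (simp add: field_simps)
    also have "\<dots> \<le> C * r2 ^ n / r1 ^ n"
      using approx[of n] r1 by (simp add: divide_right_mono)
    finally show ?thesis by (simp add: power_divide)
  qed
  have "(\<lambda>n. d n / r1 ^ n - \<beta>) \<longlonglongrightarrow> 0"
  proof (rule tendsto_0_le)
    show "(\<lambda>n. (r2 / r1) ^ n) \<longlonglongrightarrow> 0"
      using r2 r1 by (intro LIMSEQ_power_zero) simp
    show "\<forall>\<^sub>F n in sequentially. norm (d n / r1 ^ n - \<beta>) \<le> norm ((r2 / r1) ^ n) * C"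
      using err r2 r1 by (simp add: mult.commute)
  qed
  then have "(\<lambda>n. d n / r1 ^ n) \<longlonglongrightarrow> \<beta>"
    by (rule LIM_zero_cancel)
  moreover have "m \<le> d n / r1 ^ n" for n
    using lower[of n] r1 by (simp add: field_simps)
  ultimately have "m \<le> \<beta>"
    by (intro LIMSEQ_le_const) auto
  then show pos: "0 < \<beta>" using \<open>0 < m\<close> by simp
  show "(\<lambda>n. d n / (\<beta> * r1 ^ n) - 1) \<in> O(\<lambda>n. (r2 / r1) ^ n)"
  proof (rule bigoI[where c = "C / \<beta>"], rule always_eventually, rule allI)
    fix n
    have "norm (d n / (\<beta> * r1 ^ n) - 1) = \<bar>d n / r1 ^ n - \<beta>\<bar> / \<beta>"
      using pos r1 by (simp add: field_simps)
    also have "\<dots> \<le> C / \<beta> * norm ((r2 / r1) ^ n)"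
      using err[of n] pos r1 r2 by (simp add: divide_right_mono)
    finally show "norm (d n / (\<beta> * r1 ^ n) - 1) \<le> C / \<beta> * norm ((r2 / r1) ^ n)" .
  qed
qed

lemma FQ_count_approx:
  fixes r1 R :: real
  assumes r1: "FQ_poly_root (complex_of_real r1)"
    and others: "\<And>z. FQ_poly_root z \<Longrightarrow> z \<noteq> complex_of_real r1 \<Longrightarrow> cmod z \<le> R"
  shows "\<exists>\<beta> C. \<forall>n. \<bar>real (FQ_count n) - \<beta> * r1 ^ n\<bar> \<le> C * R ^ n"
proof -
  define d where "d n = complex_of_real (real (FQ_count n))" for n
  define Z where "Z = {z. poly FQ_char_poly z = 0}"
  have "poly_shift (\<Prod>z\<in>Z. [:-z, 1:]) d n = 0" for n
    unfolding Z_def FQ_char_poly_eq_prod_roots[symmetric]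
    by (simp add: d_def poly_shift_FQ_char_poly FQ_count_rec)
  then obtain c where c: "\<And>n. d n = (\<Sum>z\<in>Z. c z * z ^ n)"
    using poly_shift_prod_linear_eq_0_imp_power_sum finite_FQ_char_poly_roots
    unfolding Z_def by blast
  define Z' where "Z' = Z - {complex_of_real r1}"
  define \<beta> where "\<beta> = Re (c (complex_of_real r1))"
  define C where "C = (\<Sum>z\<in>Z'. cmod (c z))"
  have "\<bar>real (FQ_count n) - \<beta> * r1 ^ n\<bar> \<le> C * R ^ n" for n
  proof -
    have dn: "d n = c (complex_of_real r1) * complex_of_real r1 ^ n + (\<Sum>z\<in>Z'. c z * z ^ n)"
      unfolding c Z'_def using finite_FQ_char_poly_roots r1
      by (simp add: Z_def sum.remove FQ_poly_root_def poly_FQ_char_poly)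
    have "Re (d n) = real (FQ_count n)"
      by (simp add: d_def)
    moreover have "Re (c (complex_of_real r1) * complex_of_real r1 ^ n) = \<beta> * r1 ^ n"
      by (simp add: \<beta>_def flip: of_real_power)
    ultimately have "real (FQ_count n) - \<beta> * r1 ^ n = Re (\<Sum>z\<in>Z'. c z * z ^ n)"
      using arg_cong[OF dn, of Re] unfolding plus_complex.sel by linarith
    then have "\<bar>real (FQ_count n) - \<beta> * r1 ^ n\<bar> \<le> cmod (\<Sum>z\<in>Z'. c z * z ^ n)"
      by (metis abs_Re_le_cmod)
    also have "\<dots> \<le> (\<Sum>z\<in>Z'. cmod (c z) * cmod z ^ n)"
      using norm_sum[of "\<lambda>z. c z * z ^ n" Z'] by (simp add: norm_mult norm_power)
    also have "\<dots> \<le> (\<Sum>z\<in>Z'. cmod (c z) * R ^ n)"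
      using others by (intro sum_mono mult_left_mono power_mono)
        (auto simp: Z'_def Z_def FQ_poly_root_def poly_FQ_char_poly)
    finally show ?thesis
      by (simp add: C_def sum_distrib_right)
  qed
  then show ?thesis by blast
qed

lemma FQ_rec_lower_bound:
  fixes d :: "nat \<Rightarrow> real" and r :: real
  assumes rec: "\<And>n. d (n + 7) = d (n + 6) + d (n + 2) + d n"
    and init: "\<And>n. n < 7 \<Longrightarrow> 1 \<le> d n"
    and r: "r ^ 7 = r ^ 6 + r ^ 2 + 1" "1 < r"
  shows "r ^ n / r ^ 6 \<le> d n"
proof (induction n rule: less_induct)
  case (less n)
  show ?case
  proof (cases "n < 7")
    case True
    then have "r ^ n \<le> r ^ 6"
      using r(2) by (intro power_increasing) auto
    then have "r ^ n / r ^ 6 \<le> 1"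
      using r(2) by simp
    then show ?thesis
      using init[OF True] by linarith
  next
    case False
    then obtain k where n: "n = k + 7"
      by (metis add.commute le_add_diff_inverse not_less)
    have "r ^ n / r ^ 6 = (r ^ (k + 6) + r ^ (k + 2) + r ^ k) / r ^ 6"
      unfolding n power_add r(1) by (simp add: algebra_simps eval_nat_numeral)
    also have "\<dots> \<le> d (k + 6) + d (k + 2) + d k"
      using less.IH[of "k + 6"] less.IH[of "k + 2"] less.IH[of k] n
      by (simp add: add_divide_distrib)
    also have "\<dots> = d n"
      unfolding n rec ..
    finally show ?thesis .
  qed
qed

theorem mainTheorem11:
  fixes r1 r2 :: real
  assumes "FQ_poly_root (complex_of_real r1)"
    and "\<forall>x::real. FQ_poly_root (complex_of_real x) \<longrightarrow> x \<le> r1"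
    and "r2 = Max {cmod z | z. FQ_poly_root z \<and> z \<noteq> complex_of_real r1}"
  shows "\<exists>\<beta>1::real. \<beta>1 > 0 \<and>
    (\<lambda>n. real (FQ_count n) / (\<beta>1 * r1 ^ n) - 1) \<in> O(\<lambda>n. (r2 / r1) ^ n)"
proof -
  note r2 = FQ_second_root_modulus[OF assms]
  obtain \<beta> C where approx: "\<And>n. \<bar>real (FQ_count n) - \<beta> * r1 ^ n\<bar> \<le> C * r2 ^ n"
    using FQ_count_approx[OF assms(1) r2(3)] by blast
  have r1: "r1 ^ 7 = r1 ^ 6 + r1 ^ 2 + 1" "1 < r1"
    using assms(1) FQ_real_root_gt_1 by (auto simp: FQ_poly_root_of_real)
  have "r1 ^ n / r1 ^ 6 \<le> real (FQ_count n)" for n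
    using FQ_count_pos by (intro FQ_rec_lower_bound r1) (simp_all add: FQ_count_rec)
  then have lower: "1 / r1 ^ 6 * r1 ^ n \<le> real (FQ_count n)" for n
    by simp
  have "0 < 1 / r1 ^ 6" using r1 by simp
  from dominant_exponential_asymptotics[OF r2(1,2) this approx lower]
  show ?thesis by blast
qed

end
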